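(* Let $N$ be a society, $D$ an $N$-coalition, $\nabla$ an ES basic fusion operator satisfying (ESF-SD), (ESF-P) and (ESF-I), and $w\neq w'$ interpretations. Suppose $E_{w,w'},E_{w'}\in\mathcal E$ satisfy $[\![B(E_{w,w'})]\!]=\{w,w'\}$, $[\![B(E_{w'})]\!]=\{w'\}$, and $D$ is locally decisive for $E_{w,w'}$ against $E_{w'}$. Then for every interpretation $w''\notin\{w,w'\}$ and all $E_{w,w''},E_{w''}\in\mathcal E$ with $[\![B(E_{w,w''})]\!]=\{w,w''\}$ and $[\![B(E_{w''})]\!]=\{w''\}$, $D$ is decisive for $E_{w,w''}$ against $E_{w''}$.
   Context: Setting: epistemic space $(\mathcal E,B,\mathcal L_{\mathcal P})$ ($\mathcal E$ nonempty, $B:\mathcal E\to$ propositional formulas over finite $\mathcal P$, $|\mathcal P|\ge2$, image modulo equivalence exactly the consistent formulas; $[\![\phi]\!]$ models; $\varphi_M$ a formula with models exactly $M$); agents: well-ordered set $\mathcal S$; society: nonempty finite $N\subseteq\mathcal S$; $N$-profile $\Phi:N\to\mathcal E$, $E_i=\Phi(i)$, identified with $E_i$ if $N=\{i\}$; profiles on $\{i_1<\dots<i_n\}$, $\{j_1<\dots<j_m\}$ equivalent if $n=m$ and entries coincide position-wise. ES basic fusion operator: a map $\nabla(\Phi,E)\in\mathcal E$ with (ESF1) $B(\nabla(\Phi,E))\vdash B(E)$; (ESF2) equivalent profiles and $B(E)\equiv B(E')$ give equivalent $B(\nabla)$; (ESF3) if $B(E)\equiv B(E')\wedge B(E'')$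 then $B(\nabla(\Phi,E'))\wedge B(E'')\vdash B(\nabla(\Phi,E))$; (ESF4) if moreover $B(\nabla(\Phi,E'))\wedge B(E'')\nvdash\bot$ then $B(\nabla(\Phi,E))\vdash B(\nabla(\Phi,E'))\wedge B(E'')$. (ESF-SD): for every agent $i$, interpretations $w_1,w_2,w_3$ and $E_{w_1,w_2},E_{w_2,w_3}$ with $[\![B(E_{w_1,w_2})]\!]=\{w_1,w_2\}$, $[\![B(E_{w_2,w_3})]\!]=\{w_2,w_3\}$, there exist $i$-profiles realising each of: (i) $B(\nabla(E_i,E_{w_1,w_2}))\equiv\varphi_{w_1,w_2}$ and $B(\nabla(E_i,E_{w_2,w_3}))\equiv\varphi_{w_2,w_3}$; (ii) $\equiv\varphi_{w_1,w_2}$ and $\equiv\varphi_{w_2}$; (iii) $\equiv\varphi_{w_1}$ and $\equiv\varphi_{w_2,w_3}$; (iv) $\equiv\varphi_{w_1}$ and $\equiv\varphi_{w_2}$. (ESF-P): for every $N$, $N$-profile $\Phi$, $E,E'$: if $\bigwedge_{i\in N}B(\nabla(E_i,E))\nvdash\bot$ and $B(\nabla(E_i,E))\wedge B(E')\vdash\bot$ for all $i\in N$ then $B(\nabla(\Phi,E))\wedge B(E')\vdash\bot$. (ESF-I): for every $N$, $N$-profiles $\Phi,\Phi'$, $E$: if for every $E'$ with $B(E')\vdash B(E)$, $B(\nabla(E_j,E'))\equiv B(\nabla(E'_j,E'))$ for all $j\in N$, then $B(\nabla(\Phi,E))\equiv B(\nabla(\Phi',E))$. An $N$-coalition is a subset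 $D\subseteq N$. $D$ is locally decisive for $E$ against $E'$ if for every $N$-profile $\Phi$ with (i) $B(\nabla(E_i,E))\wedge B(E')\vdash\bot$ for all $i\in D$, (ii) $B(\nabla(E_j,E))\equiv B(E')$ for all $j\in N\setminus D$, (iii) $\bigwedge_{i\in D}B(\nabla(E_i,E))\nvdash\bot$, we have $B(\nabla(\Phi,E))\wedge B(E')\vdash\bot$. $D$ is decisive for $E$ against $E'$ if the same conclusion holds for every $N$-profile satisfying only (i) and (iii). *)

theory Defs
  imports Main
begin

datatype 'p form =
    FVar 'p | FTop | FBot | FNot "'p form" | FAnd "'p form" "'p form"
  | FOr "'p form" "'p form" | FImp "'p form" "'p form"

type_synonym 'p interp = "'p set"

fun sat :: "'p interp \<Rightarrow> 'p form \<Rightarrow> bool" where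
  "sat v (FVar p) = (p \<in> v)"
| "sat v FTop = True"
| "sat v FBot = False"
| "sat v (FNot f) = (\<not> sat v f)"
| "sat v (FAnd f g) = (sat v f \<and> sat v g)"
| "sat v (FOr f g) = (sat v f \<or> sat v g)"
| "sat v (FImp f g) = (sat v f \<longrightarrow> sat v g)"

definition models :: "'p form \<Rightarrow> 'p interp set" where
  "models f = {v. sat v f}"

definition entails :: "'p form \<Rightarrow> 'p form \<Rightarrow> bool" where
  "entails f g \<longleftrightarrow> (\<forall>v. sat v f \<longrightarrow> sat v g)"

definition fequiv :: "'p form \<Rightarrow> 'p form \<Rightarrow> bool" where
  "fequiv f g \<longleftrightarrow> entails f g \<and> entails g f"

definition consistent :: "'p form \<Rightarrow> bool" where
  "consistent f \<longleftrightarrow> \<not> entails f FBot"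

text \<open>The set of epistemic states is the whole type 'e; B maps states to formulas.
  The image of B modulo equivalence is exactly the set of consistent formulas.\<close>
definition epistemic_space :: "('e \<Rightarrow> ('p::finite) form) \<Rightarrow> bool" where
  "epistemic_space B \<longleftrightarrow> card (UNIV :: 'p set) \<ge> 2
     \<and> (\<forall>E. consistent (B E))
     \<and> (\<forall>f. consistent f \<longrightarrow> (\<exists>E. fequiv (B E) f))"

text \<open>Agents form a well-ordered type 'a. A profile is a partial map from agents
  to epistemic states; an N-profile is one whose domain is N.\<close>
definition society :: "'a set \<Rightarrow> bool" where
  "society N \<longleftrightarrow> finite N \<and> N \<noteq> {}"

definition profile_list :: "('a::wellorder \<rightharpoonup> 'e) \<Rightarrow> 'e list" where
  "profile_list \<Phi> = map (\<lambda>i. the (\<Phi> i)) (sorted_list_of_set (dom \<Phi>))"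

definition profile_equiv :: "('a::wellorder \<rightharpoonup> 'e) \<Rightarrow> ('a \<rightharpoonup> 'e) \<Rightarrow> bool" where
  "profile_equiv \<Phi> \<Psi> \<longleftrightarrow> profile_list \<Phi> = profile_list \<Psi>"

definition basic_fusion ::
  "('e \<Rightarrow> 'p form) \<Rightarrow> (('a::wellorder \<rightharpoonup> 'e) \<Rightarrow> 'e \<Rightarrow> 'e) \<Rightarrow> bool" where
  "basic_fusion B nab \<longleftrightarrow>
     (\<forall>\<Phi> E. society (dom \<Phi>) \<longrightarrow> entails (B (nab \<Phi> E)) (B E))
   \<and> (\<forall>\<Phi> \<Psi> E E'. society (dom \<Phi>) \<longrightarrow> society (dom \<Psi>) \<longrightarrow> profile_equiv \<Phi> \<Psi>
        \<longrightarrow> fequiv (B E) (B E') \<longrightarrow> fequiv (B (nab \<Phi> E)) (B (nab \<Psi> E')))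
   \<and> (\<forall>\<Phi> E E' E''. society (dom \<Phi>) \<longrightarrow> fequiv (B E) (FAnd (B E') (B E''))
        \<longrightarrow> entails (FAnd (B (nab \<Phi> E')) (B E'')) (B (nab \<Phi> E)))
   \<and> (\<forall>\<Phi> E E' E''. society (dom \<Phi>) \<longrightarrow> fequiv (B E) (FAnd (B E') (B E''))
        \<longrightarrow> consistent (FAnd (B (nab \<Phi> E')) (B E''))
        \<longrightarrow> entails (B (nab \<Phi> E)) (FAnd (B (nab \<Phi> E')) (B E'')))"

definition ESF_SD ::
  "('e \<Rightarrow> 'p form) \<Rightarrow> (('a::wellorder \<rightharpoonup> 'e) \<Rightarrow> 'e \<Rightarrow> 'e) \<Rightarrow> bool" where
  "ESF_SD B nab \<longleftrightarrow>
     (\<forall>i w1 w2 w3 E12 E23. distinct [w1, w2, w3]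
        \<longrightarrow> models (B E12) = {w1, w2} \<longrightarrow> models (B E23) = {w2, w3} \<longrightarrow>
       (\<exists>Ei. models (B (nab [i \<mapsto> Ei] E12)) = {w1, w2} \<and> models (B (nab [i \<mapsto> Ei] E23)) = {w2, w3})
     \<and> (\<exists>Ei. models (B (nab [i \<mapsto> Ei] E12)) = {w1, w2} \<and> models (B (nab [i \<mapsto> Ei] E23)) = {w2})
     \<and> (\<exists>Ei. models (B (nab [i \<mapsto> Ei] E12)) = {w1} \<and> models (B (nab [i \<mapsto> Ei] E23)) = {w2, w3})
     \<and> (\<exists>Ei. models (B (nab [i \<mapsto> Ei] E12)) = {w1} \<and> models (B (nab [i \<mapsto> Ei] E23)) = {w2}))"

definition indiv_consistent ::
  "('e \<Rightarrow> 'p form) \<Rightarrow> (('a::wellorder \<rightharpoonup> 'e) \<Rightarrow> 'e \<Rightarrow> 'e) \<Rightarrow> 'a set \<Rightarrow> ('a \<rightharpoonup> 'e) \<Rightarrow> 'e \<Rightarrow> bool" where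
  "indiv_consistent B nab D \<Phi> E \<longleftrightarrow>
     (\<exists>v. \<forall>i\<in>D. sat v (B (nab [i \<mapsto> the (\<Phi> i)] E)))"

definition ESF_P ::
  "('e \<Rightarrow> 'p form) \<Rightarrow> (('a::wellorder \<rightharpoonup> 'e) \<Rightarrow> 'e \<Rightarrow> 'e) \<Rightarrow> bool" where
  "ESF_P B nab \<longleftrightarrow>
     (\<forall>\<Phi> E E'. society (dom \<Phi>) \<longrightarrow> indiv_consistent B nab (dom \<Phi>) \<Phi> E
        \<longrightarrow> (\<forall>i\<in>dom \<Phi>. entails (FAnd (B (nab [i \<mapsto> the (\<Phi> i)] E)) (B E')) FBot)
        \<longrightarrow> entails (FAnd (B (nab \<Phi> E)) (B E')) FBot)"

definition ESF_I ::
  "('e \<Rightarrow> 'p form) \<Rightarrow> (('a::wellorder \<rightharpoonup> 'e) \<Rightarrow> 'e \<Rightarrow> 'e) \<Rightarrow> bool" where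
  "ESF_I B nab \<longleftrightarrow>
     (\<forall>\<Phi> \<Psi> E. society (dom \<Phi>) \<longrightarrow> dom \<Psi> = dom \<Phi> \<longrightarrow>
        (\<forall>E'. entails (B E') (B E) \<longrightarrow>
           (\<forall>j\<in>dom \<Phi>. fequiv (B (nab [j \<mapsto> the (\<Phi> j)] E')) (B (nab [j \<mapsto> the (\<Psi> j)] E'))))
        \<longrightarrow> fequiv (B (nab \<Phi> E)) (B (nab \<Psi> E)))"

definition locally_decisive ::
  "('e \<Rightarrow> 'p form) \<Rightarrow> (('a::wellorder \<rightharpoonup> 'e) \<Rightarrow> 'e \<Rightarrow> 'e) \<Rightarrow> 'a set \<Rightarrow> 'a set \<Rightarrow> 'e \<Rightarrow> 'e \<Rightarrow> bool" where
  "locally_decisive B nab N D E E' \<longleftrightarrow>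
     (\<forall>\<Phi>. dom \<Phi> = N \<longrightarrow>
        (\<forall>i\<in>D. entails (FAnd (B (nab [i \<mapsto> the (\<Phi> i)] E)) (B E')) FBot)
        \<longrightarrow> (\<forall>j\<in>N - D. fequiv (B (nab [j \<mapsto> the (\<Phi> j)] E)) (B E'))
        \<longrightarrow> indiv_consistent B nab D \<Phi> E
        \<longrightarrow> entails (FAnd (B (nab \<Phi> E)) (B E')) FBot)"

definition decisive ::
  "('e \<Rightarrow> 'p form) \<Rightarrow> (('a::wellorder \<rightharpoonup> 'e) \<Rightarrow> 'e \<Rightarrow> 'e) \<Rightarrow> 'a set \<Rightarrow> 'a set \<Rightarrow> 'e \<Rightarrow> 'e \<Rightarrow> bool" where
  "decisive B nab N D E E' \<longleftrightarrow>
     (\<forall>\<Phi>. dom \<Phi> = N \<longrightarrow>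
        (\<forall>i\<in>D. entails (FAnd (B (nab [i \<mapsto> the (\<Phi> i)] E)) (B E')) FBot)
        \<longrightarrow> indiv_consistent B nab D \<Phi> E
        \<longrightarrow> entails (FAnd (B (nab \<Phi> E)) (B E')) FBot)"

end

theory Submission
  imports Defs
begin

text \<open>Take a profile \<open>\<Phi>\<close> in which every member of \<open>D\<close> rejects \<open>w''\<close> on \<open>{w, w''}\<close>. With the help
  of (ESF-SD) and the ``triangle'' consequence of (ESF3/4) we replace every agent by one who
  behaves identically on \<open>{w, w''}\<close>, who, if a member of \<open>D\<close>, chooses \<open>w\<close> on \<open>{w, w'}\<close>, and
  who otherwise chooses \<open>w'\<close> there, and who always chooses \<open>w'\<close> on \<open>{w', w''}\<close>. Local
  decisiveness makes the fused choice on \<open>{w, w'}\<close> equal to \<open>{w}\<close>, Pareto (ESF-P) excludes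
  \<open>w''\<close> on \<open>{w', w''}\<close>, so the triangle lemma yields \<open>{w}\<close> on \<open>{w, w''}\<close>; independence
  (ESF-I) transfers this back to \<open>\<Phi>\<close>.\<close>

lemma models_FAnd [simp]: "models (FAnd f g) = models f \<inter> models g"
  by (auto simp: models_def)

lemma models_FBot [simp]: "models FBot = {}"
  by (auto simp: models_def)

lemma entails_iff_models_subset: "entails f g \<longleftrightarrow> models f \<subseteq> models g"
  by (auto simp: entails_def models_def)

lemma fequiv_iff_models_eq: "fequiv f g \<longleftrightarrow> models f = models g"
  by (auto simp: fequiv_def entails_iff_models_subset)

lemma consistent_iff_models_nonempty: "consistent f \<longleftrightarrow> models f \<noteq> {}"
  by (auto simp: consistent_def entails_iff_models_subset)

lemma society_singleton [simp]: "society (dom [j \<mapsto> e])"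
  by (simp add: society_def)

definition char_form :: "('p::finite) interp \<Rightarrow> 'p form" where
  "char_form v = foldr (\<lambda>p f. FAnd (if p \<in> v then FVar p else FNot (FVar p)) f)
     (SOME ps. set ps = UNIV) FTop"

lemma sat_char_form: "sat u (char_form v) \<longleftrightarrow> u = v"
proof -
  have "sat u (foldr (\<lambda>p f. FAnd (if p \<in> v then FVar p else FNot (FVar p)) f) ps FTop)
      \<longleftrightarrow> (\<forall>p\<in>set ps. p \<in> u \<longleftrightarrow> p \<in> v)" for ps
    by (induction ps) auto
  moreover have "set (SOME ps. set ps = UNIV) = (UNIV :: 'a set)"
    by (rule someI_ex[OF finite_list[OF finite_UNIV]])
  ultimately show ?thesis
    unfolding char_form_def by auto
qed

lemma models_exist:
  fixes M :: "('p::finite) interp set"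
  shows "\<exists>f. models f = M"
proof -
  obtain vs where vs: "set vs = M"
    using finite_list[of M] by auto
  have "sat u (foldr (\<lambda>v f. FOr (char_form v) f) vs FBot) \<longleftrightarrow> u \<in> set vs" for u
    by (induction vs) (auto simp: sat_char_form)
  with vs show ?thesis
    by (auto simp: models_def)
qed

lemma profile_choice:
  assumes "\<And>j. j \<in> N \<Longrightarrow> \<exists>e. P j e"
  shows "\<exists>\<Psi>. dom \<Psi> = N \<and> (\<forall>j\<in>N. P j (the (\<Psi> j)))"
proof
  let ?\<Psi> = "\<lambda>j. if j \<in> N then Some (SOME e. P j e) else None"
  show "dom ?\<Psi> = N \<and> (\<forall>j\<in>N. P j (the (?\<Psi> j)))"
    using someI_ex[OF assms] by (auto simp: dom_def)
qed

locale es_basic_fusion =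
  fixes B :: "'e \<Rightarrow> ('p::finite) form"
    and nab :: "('a::wellorder \<rightharpoonup> 'e) \<Rightarrow> 'e \<Rightarrow> 'e"
  assumes epistemic_space: "epistemic_space B"
    and basic_fusion: "basic_fusion B nab"
begin

abbreviation indiv_models :: "'a \<Rightarrow> 'e \<Rightarrow> 'e \<Rightarrow> 'p interp set" where
  "indiv_models j e E \<equiv> models (B (nab [j \<mapsto> e] E))"

lemma models_nonempty: "models (B E) \<noteq> {}"
  using epistemic_space by (simp add: epistemic_space_def consistent_iff_models_nonempty)

lemma state_exists:
  assumes "M \<noteq> {}"
  shows "\<exists>E. models (B E) = M"
proof -
  obtain f where f: "models f = M"
    using models_exist by blast
  then have "consistent f"
    using assms by (simp add: consistent_iff_models_nonempty)
  then obtain E where "fequiv (B E) f"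
    using epistemic_space unfolding epistemic_space_def by blast
  with f show ?thesis
    by (auto simp: fequiv_iff_models_eq)
qed

lemma fusion_models_subset:
  "society (dom \<Phi>) \<Longrightarrow> models (B (nab \<Phi> E)) \<subseteq> models (B E)"
  using basic_fusion by (simp add: basic_fusion_def entails_iff_models_subset)

lemma fusion_models_singleton:
  "society (dom \<Phi>) \<Longrightarrow> models (B E) = {a} \<Longrightarrow> models (B (nab \<Phi> E)) = {a}"
  using fusion_models_subset[of \<Phi> E] models_nonempty[of "nab \<Phi> E"] by auto

lemma fusion_models_cong:
  "society (dom \<Phi>) \<Longrightarrow> models (B E) = models (B E')
    \<Longrightarrow> models (B (nab \<Phi> E)) = models (B (nab \<Phi> E'))"
  using basic_fusion unfolding basic_fusion_def fequiv_iff_models_eq profile_equiv_def by blast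

lemma fusion_models_restrict:
  assumes "society (dom \<Phi>)" and "models (B E) \<subseteq> models (B E')"
    and "models (B (nab \<Phi> E')) \<inter> models (B E) \<noteq> {}"
  shows "models (B (nab \<Phi> E)) = models (B (nab \<Phi> E')) \<inter> models (B E)"
proof -
  have E: "fequiv (B E) (FAnd (B E') (B E))"
    using assms(2) by (auto simp: fequiv_iff_models_eq)
  have "entails (FAnd (B (nab \<Phi> E')) (B E)) (B (nab \<Phi> E))"
    using basic_fusion assms(1) E unfolding basic_fusion_def by blast
  moreover have "entails (B (nab \<Phi> E)) (FAnd (B (nab \<Phi> E')) (B E))"
    using basic_fusion assms(1,3) E
    unfolding basic_fusion_def by (simp add: consistent_iff_models_nonempty)
  ultimately show ?thesis
    by (auto simp: entails_iff_models_subset)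
qed

text \<open>The fused choice on \<open>{x, y, z}\<close> determines those on its two-element subsets; if it is \<open>{x}\<close>
  on \<open>{x, y}\<close> and not \<open>{z}\<close> on \<open>{y, z}\<close>, then neither \<open>y\<close> nor \<open>z\<close> is chosen on \<open>{x, y, z}\<close>.\<close>
lemma fusion_models_triangle:
  assumes soc: "society (dom \<Phi>)" and "distinct [x, y, z]"
    and Exy: "models (B Exy) = {x, y}" and Eyz: "models (B Eyz) = {y, z}"
    and Exz: "models (B Exz) = {x, z}"
    and chose_x: "models (B (nab \<Phi> Exy)) = {x}"
    and not_z: "models (B (nab \<Phi> Eyz)) \<noteq> {z}"
  shows "models (B (nab \<Phi> Exz)) = {x}"
proof -
  obtain Exyz where Exyz: "models (B Exyz) = {x, y, z}"
    using state_exists[of "{x, y, z}"] by blast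
  let ?R = "models (B (nab \<Phi> Exyz))"
  have restrict: "models (B (nab \<Phi> E)) = ?R \<inter> models (B E)"
    if "models (B E) \<subseteq> {x, y, z}" and "?R \<inter> models (B E) \<noteq> {}" for E
    using fusion_models_restrict[OF soc, of E Exyz] that unfolding Exyz by blast
  have R: "?R \<subseteq> {x, y, z}" "?R \<noteq> {}"
    using fusion_models_subset[OF soc, of Exyz] models_nonempty[of "nab \<Phi> Exyz"]
    unfolding Exyz by blast+
  have "y \<notin> ?R"
  proof
    assume "y \<in> ?R"
    then have "models (B (nab \<Phi> Exy)) = ?R \<inter> {x, y}"
      using restrict[of Exy] unfolding Exy by blast
    with \<open>y \<in> ?R\<close> chose_x \<open>distinct [x, y, z]\<close> show False
      by auto
  qed
  moreover have "z \<notin> ?R"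
  proof
    assume "z \<in> ?R"
    then have "models (B (nab \<Phi> Eyz)) = ?R \<inter> {y, z}"
      using restrict[of Eyz] unfolding Eyz by blast
    with \<open>z \<in> ?R\<close> \<open>y \<notin> ?R\<close> not_z show False
      by auto
  qed
  ultimately have "?R = {x}"
    using R by auto
  then show ?thesis
    using restrict[of Exz] unfolding Exz by auto
qed

lemma ESF_SD_case_iii:
  assumes "ESF_SD B nab" and "distinct [x, y, z]"
    and "models (B Exy) = {x, y}" and "models (B Eyz) = {y, z}"
  shows "\<exists>e. indiv_models i e Exy = {x} \<and> indiv_models i e Eyz = {y, z}"
  using assms(1)[unfolded ESF_SD_def, rule_format, OF assms(2-4), of i] by blast

lemma ESF_SD_case_iv:
  assumes "ESF_SD B nab" and "distinct [x, y, z]"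
    and "models (B Exy) = {x, y}" and "models (B Eyz) = {y, z}"
  shows "\<exists>e. indiv_models i e Exy = {x} \<and> indiv_models i e Eyz = {y}"
  using assms(1)[unfolded ESF_SD_def, rule_format, OF assms(2-4), of i] by blast

lemma indiv_state_with_ranking:
  assumes "ESF_SD B nab" and "distinct [x, y, z]"
    and Exy: "models (B Exy) = {x, y}" and Eyz: "models (B Eyz) = {y, z}"
    and Exz: "models (B Exz) = {x, z}"
  shows "\<exists>e. indiv_models i e Exy = {x} \<and> indiv_models i e Eyz = {y} \<and> indiv_models i e Exz = {x}"
proof -
  obtain e where e: "indiv_models i e Exy = {x}" "indiv_models i e Eyz = {y}"
    using ESF_SD_case_iv[OF assms(1-4)] by blast
  moreover have "indiv_models i e Exz = {x}"
    using fusion_models_triangle[OF society_singleton assms(2) Exy Eyz Exz] e assms(2) by auto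
  ultimately show ?thesis
    by blast
qed

lemma indiv_state_with_top:
  assumes "ESF_SD B nab" and "distinct [x, y, z]"
    and Exy: "models (B Exy) = {x, y}" and Eyz: "models (B Eyz) = {y, z}"
    and Exz: "models (B Exz) = {x, z}"
    and "S \<noteq> {}" and "S \<subseteq> {x, z}"
  shows "\<exists>e. indiv_models i e Exy = {y} \<and> indiv_models i e Eyz = {y} \<and> indiv_models i e Exz = S"
proof -
  have yx: "models (B Exy) = {y, x}" and zx: "models (B Exz) = {z, x}"
    using Exy Exz by auto
  have "distinct [y, x, z]" "distinct [y, z, x]"
    using assms(2) by auto
  consider "S = {x, z}" | "S = {x}" | "S = {z}"
    using assms(6,7) by blast
  then show ?thesis
  proof cases
    case 1
    then obtain e where e: "indiv_models i e Exy = {y}" "indiv_models i e Exz = S"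
      using ESF_SD_case_iii[OF assms(1) \<open>distinct [y, x, z]\<close> yx Exz] by blast
    moreover have "indiv_models i e Eyz = {y}"
      using fusion_models_triangle[OF society_singleton \<open>distinct [y, x, z]\<close> yx Exz Eyz] e 1 assms(2)
      by auto
    ultimately show ?thesis
      by blast
  next
    case 2
    then obtain e where e: "indiv_models i e Exy = {y}" "indiv_models i e Exz = S"
      using ESF_SD_case_iv[OF assms(1) \<open>distinct [y, x, z]\<close> yx Exz] by blast
    moreover have "indiv_models i e Eyz = {y}"
      using fusion_models_triangle[OF society_singleton \<open>distinct [y, x, z]\<close> yx Exz Eyz] e 2 assms(2)
      by auto
    ultimately show ?thesis
      by blast
  next
    case 3
    then obtain e where e: "indiv_models i e Eyz = {y}" "indiv_models i e Exz = S"
      using ESF_SD_case_iv[OF assms(1) \<open>distinct [y, z, x]\<close> Eyz zx] by blast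
    moreover have "indiv_models i e Exy = {y}"
      using fusion_models_triangle[OF society_singleton \<open>distinct [y, z, x]\<close> Eyz zx yx e(1)] e(2) 3
        assms(2) by fastforce
    ultimately show ?thesis
      by blast
  qed
qed

lemma ESF_P_models:
  assumes "ESF_P B nab" and "society (dom \<Psi>)"
    and "\<forall>i\<in>dom \<Psi>. a \<in> indiv_models i (the (\<Psi> i)) E"
    and "\<forall>i\<in>dom \<Psi>. indiv_models i (the (\<Psi> i)) E \<inter> models (B E') = {}"
  shows "models (B (nab \<Psi> E)) \<inter> models (B E') = {}"
proof -
  have "indiv_consistent B nab (dom \<Psi>) \<Psi> E"
    using assms(3) unfolding indiv_consistent_def models_def by blast
  with assms show ?thesis
    unfolding ESF_P_def by (simp add: entails_iff_models_subset)
qed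

lemma locally_decisive_models:
  assumes "locally_decisive B nab N D E E'" and "dom \<Psi> = N"
    and "\<forall>i\<in>D. a \<in> indiv_models i (the (\<Psi> i)) E"
    and "\<forall>i\<in>D. indiv_models i (the (\<Psi> i)) E \<inter> models (B E') = {}"
    and "\<forall>j\<in>N - D. indiv_models j (the (\<Psi> j)) E = models (B E')"
  shows "models (B (nab \<Psi> E)) \<inter> models (B E') = {}"
proof -
  have "indiv_consistent B nab D \<Psi> E"
    using assms(3) unfolding indiv_consistent_def models_def by blast
  with assms show ?thesis
    unfolding locally_decisive_def by (simp add: entails_iff_models_subset fequiv_iff_models_eq)
qed

text \<open>On a two-element set of models the individual choices determine the fused one, since every
  further restriction is a singleton on which all choices agree.\<close>
lemma ESF_I_pair:
  assumes "ESF_I B nab" and soc: "society (dom \<Phi>)" and "dom \<Psi> = dom \<Phi>"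
    and E: "models (B E) = {a, b}"
    and agree: "\<forall>j\<in>dom \<Phi>. indiv_models j (the (\<Phi> j)) E = indiv_models j (the (\<Psi> j)) E"
  shows "models (B (nab \<Phi> E)) = models (B (nab \<Psi> E))"
proof -
  have "fequiv (B (nab \<Phi> E)) (B (nab \<Psi> E))"
  proof (rule assms(1)[unfolded ESF_I_def, rule_format, OF soc assms(3)])
    fix E' j
    assume "entails (B E') (B E)" and j: "j \<in> dom \<Phi>"
    then have sub: "models (B E') \<subseteq> {a, b}"
      by (simp add: entails_iff_models_subset E)
    show "fequiv (B (nab [j \<mapsto> the (\<Phi> j)] E')) (B (nab [j \<mapsto> the (\<Psi> j)] E'))"
    proof (cases "models (B E') = {a, b}")
      case True
      then have "indiv_models j e E' = indiv_models j e E" for e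
        using fusion_models_cong[OF society_singleton] E by simp
      moreover have "indiv_models j (the (\<Phi> j)) E = indiv_models j (the (\<Psi> j)) E"
        using agree j by blast
      ultimately show ?thesis
        by (simp add: fequiv_iff_models_eq)
    next
      case False
      with sub models_nonempty[of E'] obtain c where "models (B E') = {c}"
        by blast
      then have "indiv_models j e E' = {c}" for e
        using fusion_models_singleton[OF society_singleton] by simp
      then show ?thesis
        by (simp add: fequiv_iff_models_eq)
    qed
  qed
  then show ?thesis
    by (simp add: fequiv_iff_models_eq)
qed

lemma indiv_replacement:
  assumes "ESF_SD B nab" and "distinct [w, w', w'']"
    and Eww': "models (B Eww') = {w, w'}" and Ew'w'': "models (B Ew'w'') = {w', w''}"
    and Eww'': "models (B Eww'') = {w, w''}"
    and rejects: "j \<in> D \<Longrightarrow> w'' \<notin> indiv_models j e0 Eww''"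
  shows "\<exists>e. indiv_models j e Eww'' = indiv_models j e0 Eww''
           \<and> indiv_models j e Ew'w'' = {w'}
           \<and> indiv_models j e Eww' = (if j \<in> D then {w} else {w'})"
proof -
  let ?S = "indiv_models j e0 Eww''"
  have S: "?S \<subseteq> {w, w''}" "?S \<noteq> {}"
    using fusion_models_subset[OF society_singleton] models_nonempty Eww'' by metis+
  show ?thesis
  proof (cases "j \<in> D")
    case True
    with rejects S have "?S = {w}"
      by blast
    moreover obtain e where "indiv_models j e Eww' = {w}" "indiv_models j e Ew'w'' = {w'}"
      "indiv_models j e Eww'' = {w}"
      using indiv_state_with_ranking[OF assms(1-2) Eww' Ew'w'' Eww'', of j] by blast
    ultimately show ?thesis
      using True by (intro exI[of _ e]) simp
  next
    case False
    obtain e where "indiv_models j e Eww' = {w'}" "indiv_models j e Ew'w'' = {w'}"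
      "indiv_models j e Eww'' = ?S"
      using indiv_state_with_top[OF assms(1-2) Eww' Ew'w'' Eww'' S(2,1), of j] by blast
    then show ?thesis
      using False by (intro exI[of _ e]) simp
  qed
qed

lemma replacement_profile:
  assumes "ESF_SD B nab" and "distinct [w, w', w'']"
    and "models (B Eww') = {w, w'}" and "models (B Ew'w'') = {w', w''}"
    and "models (B Eww'') = {w, w''}"
    and rejects: "\<forall>i\<in>D. w'' \<notin> indiv_models i (the (\<Phi> i)) Eww''"
  obtains \<Psi> where "dom \<Psi> = dom \<Phi>"
    and "\<And>j. j \<in> dom \<Phi> \<Longrightarrow> indiv_models j (the (\<Psi> j)) Eww'' = indiv_models j (the (\<Phi> j)) Eww''"
    and "\<And>j. j \<in> dom \<Phi> \<Longrightarrow> indiv_models j (the (\<Psi> j)) Ew'w'' = {w'}"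
    and "\<And>j. j \<in> dom \<Phi> \<Longrightarrow> indiv_models j (the (\<Psi> j)) Eww' = (if j \<in> D then {w} else {w'})"
proof -
  define replaces where "replaces j e \<longleftrightarrow> indiv_models j e Eww'' = indiv_models j (the (\<Phi> j)) Eww''
          \<and> indiv_models j e Ew'w'' = {w'}
          \<and> indiv_models j e Eww' = (if j \<in> D then {w} else {w'})" for j e
  have "\<exists>e. replaces j e" if "j \<in> dom \<Phi>" for j
    unfolding replaces_def
    by (rule indiv_replacement[OF assms(1-5)]) (use rejects in blast)
  with profile_choice[of "dom \<Phi>" replaces] obtain \<Psi>
    where "dom \<Psi> = dom \<Phi>" and "\<forall>j\<in>dom \<Phi>. replaces j (the (\<Psi> j))"
    by blast
  then show thesis
    by (intro that[of \<Psi>]) (simp_all add: replaces_def)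
qed

lemma replacement_fusion_chooses_w:
  assumes "ESF_P B nab" and "society N" and distinct: "distinct [w, w', w'']"
    and Eww': "models (B Eww') = {w, w'}" and Ew': "models (B Ew') = {w'}"
    and Ew'w'': "models (B Ew'w'') = {w', w''}"
    and Eww'': "models (B Eww'') = {w, w''}" and Ew'': "models (B Ew'') = {w''}"
    and "locally_decisive B nab N D Eww' Ew'" and dom: "dom \<Psi> = N"
    and D_choose_w: "\<And>i. i \<in> D \<Longrightarrow> indiv_models i (the (\<Psi> i)) Eww' = {w}"
    and others_choose_w': "\<And>j. j \<in> N - D \<Longrightarrow> indiv_models j (the (\<Psi> j)) Eww' = {w'}"
    and all_choose_w': "\<And>j. j \<in> N \<Longrightarrow> indiv_models j (the (\<Psi> j)) Ew'w'' = {w'}"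
  shows "models (B (nab \<Psi> Eww'')) = {w}"
proof -
  have society: "society (dom \<Psi>)"
    using \<open>society N\<close> dom by simp
  have "w \<noteq> w'" "w' \<noteq> w''"
    using distinct by simp_all
  have "models (B (nab \<Psi> Eww')) \<inter> models (B Ew') = {}"
    using locally_decisive_models[OF assms(9) dom, of w] D_choose_w others_choose_w' Ew' \<open>w \<noteq> w'\<close>
    by simp
  with Ew' have "w' \<notin> models (B (nab \<Psi> Eww'))"
    by simp
  moreover have "models (B (nab \<Psi> Eww')) \<subseteq> {w, w'}"
    using fusion_models_subset[OF society, of Eww'] Eww' by simp
  ultimately have "models (B (nab \<Psi> Eww')) = {w}"
    using models_nonempty[of "nab \<Psi> Eww'"] by blast
  moreover have "models (B (nab \<Psi> Ew'w'')) \<inter> models (B Ew'') = {}"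
    using ESF_P_models[OF assms(1) society, of w' Ew'w'' Ew''] all_choose_w' dom Ew'' \<open>w' \<noteq> w''\<close>
    by simp
  with Ew'' have "models (B (nab \<Psi> Ew'w'')) \<noteq> {w''}"
    by auto
  ultimately show ?thesis
    using fusion_models_triangle[OF society distinct Eww' Ew'w'' Eww''] by simp
qed

lemma decisive_if_locally_decisive:
  assumes "ESF_SD B nab" and "ESF_P B nab" and "ESF_I B nab"
    and "society N" and "D \<subseteq> N" and distinct: "distinct [w, w', w'']"
    and Eww': "models (B Eww') = {w, w'}" and Ew': "models (B Ew') = {w'}"
    and "locally_decisive B nab N D Eww' Ew'"
    and Eww'': "models (B Eww'') = {w, w''}" and Ew'': "models (B Ew'') = {w''}"
  shows "decisive B nab N D Eww'' Ew''"
  unfolding decisive_def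
proof (intro allI impI)
  fix \<Phi>
  assume dom: "dom \<Phi> = N"
    and rejects: "\<forall>i\<in>D. entails (FAnd (B (nab [i \<mapsto> the (\<Phi> i)] Eww'')) (B Ew'')) FBot"
  obtain Ew'w'' where Ew'w'': "models (B Ew'w'') = {w', w''}"
    using state_exists[of "{w', w''}"] by blast
  from rejects Ew'' have "\<forall>i\<in>D. w'' \<notin> indiv_models i (the (\<Phi> i)) Eww''"
    unfolding entails_iff_models_subset models_FAnd models_FBot by blast
  then obtain \<Psi> where dom\<Psi>: "dom \<Psi> = dom \<Phi>"
    and \<Psi>_Eww'': "\<And>j. j \<in> dom \<Phi> \<Longrightarrow> indiv_models j (the (\<Psi> j)) Eww'' = indiv_models j (the (\<Phi> j)) Eww''"
    and \<Psi>_Ew'w'': "\<And>j. j \<in> dom \<Phi> \<Longrightarrow> indiv_models j (the (\<Psi> j)) Ew'w'' = {w'}"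
    and \<Psi>_Eww': "\<And>j. j \<in> dom \<Phi> \<Longrightarrow> indiv_models j (the (\<Psi> j)) Eww' = (if j \<in> D then {w} else {w'})"
    by (rule replacement_profile[OF assms(1) distinct Eww' Ew'w'' Eww'']) iprover
  have "models (B (nab \<Psi> Eww'')) = {w}"
  proof (rule replacement_fusion_chooses_w[OF assms(2,4) distinct Eww' Ew' Ew'w'' Eww'' Ew'' assms(9)])
    show "dom \<Psi> = N"
      using dom dom\<Psi> by simp
    show "indiv_models i (the (\<Psi> i)) Eww' = {w}" if "i \<in> D" for i
      using \<Psi>_Eww'[of i] that \<open>D \<subseteq> N\<close> dom by auto
    show "indiv_models j (the (\<Psi> j)) Eww' = {w'}" if "j \<in> N - D" for j
      using \<Psi>_Eww'[of j] that dom by auto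
    show "indiv_models j (the (\<Psi> j)) Ew'w'' = {w'}" if "j \<in> N" for j
      using \<Psi>_Ew'w''[of j] that dom by simp
  qed
  moreover have "models (B (nab \<Phi> Eww'')) = models (B (nab \<Psi> Eww''))"
    using ESF_I_pair[OF assms(3) _ dom\<Psi> Eww''] \<Psi>_Eww'' \<open>society N\<close> dom by simp
  ultimately show "entails (FAnd (B (nab \<Phi> Eww'')) (B Ew'')) FBot"
    using distinct Ew'' by (simp add: entails_iff_models_subset)
qed

end

theorem proposition14:
  fixes B :: "'e \<Rightarrow> ('p::finite) form"
    and nab :: "('a::wellorder \<rightharpoonup> 'e) \<Rightarrow> 'e \<Rightarrow> 'e"
    and N D :: "'a set"
    and w w' :: "'p interp"
    and Eww' Ew' :: 'e
  assumes "epistemic_space B"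
    and "society N" and "D \<subseteq> N"
    and "basic_fusion B nab" and "ESF_SD B nab" and "ESF_P B nab" and "ESF_I B nab"
    and "w \<noteq> w'"
    and "models (B Eww') = {w, w'}" and "models (B Ew') = {w'}"
    and "locally_decisive B nab N D Eww' Ew'"
  shows "\<forall>w'' Eww'' Ew''. w'' \<notin> {w, w'}
           \<longrightarrow> models (B Eww'') = {w, w''} \<longrightarrow> models (B Ew'') = {w''}
           \<longrightarrow> decisive B nab N D Eww'' Ew''"
proof (intro allI impI)
  fix w'' Eww'' Ew''
  assume "w'' \<notin> {w, w'}" and Eww'': "models (B Eww'') = {w, w''}"
    and Ew'': "models (B Ew'') = {w''}"
  with \<open>w \<noteq> w'\<close> have "distinct [w, w', w'']"
    by auto
  interpret es_basic_fusion B nab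
    using assms(1,4) by unfold_locales
  show "decisive B nab N D Eww'' Ew''"
    by (rule decisive_if_locally_decisive[OF assms(5-7,2,3) \<open>distinct [w, w', w'']\<close>
          assms(9-11) Eww'' Ew''])
qed

end
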